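(* Let $k$ be an algebraically closed field of characteristic zero, $\mathfrak g$ a nilpotent Lie algebra over $k$ of dimension $n\ge 2$, and $(A,\cdot)$ an LR-structure on $\mathfrak g$ such that the commuting family $\{L(x):x\in A\}$ has a single weight $\alpha$ on $A$, with $\alpha\neq 0$ (i.e., each $L(x)$ has the single eigenvalue $\alpha(L(x))$, and $\alpha$ is not identically zero). Let $e_1,\dots,e_n$ be a basis of $A$ in which all $L(x)$ are upper triangular, normalized so that $\alpha(L(e_n))=1$ and $\alpha(L(e_k))=0$ for $1\le k\le n-1$. Write $L(e_k)=(a^k_{i,j})_{1\le i,j\le n}$. Then $a^k_{n-1,n}=0$ for all $k=1,\dots,n-2$, and the subspace $\mathrm{span}(e_1,\dots,e_{n-2})$ is a two-sided ideal of $A$.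
   Context: An LR-algebra is a vector space $A$ with a bilinear product $\cdot$ satisfying $x\cdot(y\cdot z)=y\cdot(x\cdot z)$ and $(x\cdot y)\cdot z=(x\cdot z)\cdot y$ for all $x,y,z\in A$. An LR-structure on a Lie algebra $\mathfrak g$ is an LR-algebra product on the underlying vector space of $\mathfrak g$ with $x\cdot y-y\cdot x=[x,y]$. $L(x)y=x\cdot y$. (In this setting a basis with the stated normalization always exists.) *)

theory Defs
  imports "HOL-Computational_Algebra.Polynomial"
begin

text \<open>Coordinates: the algebra A is k^n, realised as functions nat => k supported on {1..n};
  the basis vector e_i is the i-th coordinate vector. The product is given by structure
  constants: e_i * e_j = sum_m c i j m e_m.\<close>

definition vecs :: "nat \<Rightarrow> (nat \<Rightarrow> 'a::field) set" where
  "vecs n = {x. \<forall>i. i \<notin> {1..n} \<longrightarrow> x i = 0}"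

definition basis_vec :: "nat \<Rightarrow> nat \<Rightarrow> 'a::field" where
  "basis_vec i = (\<lambda>m. if m = i then 1 else 0)"

definition prod_sc :: "nat \<Rightarrow> (nat \<Rightarrow> nat \<Rightarrow> nat \<Rightarrow> 'a::field)
    \<Rightarrow> (nat \<Rightarrow> 'a) \<Rightarrow> (nat \<Rightarrow> 'a) \<Rightarrow> (nat \<Rightarrow> 'a)" where
  "prod_sc n c x y = (\<lambda>m. if m \<in> {1..n} then
      (\<Sum>i=1..n. \<Sum>j=1..n. x i * y j * c i j m) else 0)"

definition bracket_sc :: "nat \<Rightarrow> (nat \<Rightarrow> nat \<Rightarrow> nat \<Rightarrow> 'a::field)
    \<Rightarrow> (nat \<Rightarrow> 'a) \<Rightarrow> (nat \<Rightarrow> 'a) \<Rightarrow> (nat \<Rightarrow> 'a)" where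
  "bracket_sc n c x y = (\<lambda>m. prod_sc n c x y m - prod_sc n c y x m)"

definition is_LR_algebra :: "nat \<Rightarrow> (nat \<Rightarrow> nat \<Rightarrow> nat \<Rightarrow> 'a::field) \<Rightarrow> bool" where
  "is_LR_algebra n c \<longleftrightarrow>
     (\<forall>x\<in>vecs n. \<forall>y\<in>vecs n. \<forall>z\<in>vecs n.
        prod_sc n c x (prod_sc n c y z) = prod_sc n c y (prod_sc n c x z) \<and>
        prod_sc n c (prod_sc n c x y) z = prod_sc n c (prod_sc n c x z) y)"

text \<open>Nilpotency of the Lie algebra (A, [x,y] = x*y - y*x): some term of the lower central
  series vanishes, i.e. all N-fold iterated brackets [x1,[x2,...,[xN,y]...]] are zero.\<close>
definition lie_nilpotent :: "nat \<Rightarrow> (nat \<Rightarrow> nat \<Rightarrow> nat \<Rightarrow> 'a::field) \<Rightarrow> bool" where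
  "lie_nilpotent n c \<longleftrightarrow>
     (\<exists>N. \<forall>xs y. length xs = N \<longrightarrow> set xs \<subseteq> vecs n \<longrightarrow> y \<in> vecs n \<longrightarrow>
        foldr (bracket_sc n c) xs y = (\<lambda>_. 0))"

definition alg_closed :: "'a::field itself \<Rightarrow> bool" where
  "alg_closed _ \<longleftrightarrow> (\<forall>p :: 'a poly. degree p > 0 \<longrightarrow> (\<exists>x. poly p x = 0))"

definition two_sided_ideal :: "nat \<Rightarrow> (nat \<Rightarrow> nat \<Rightarrow> nat \<Rightarrow> 'a::field)
    \<Rightarrow> (nat \<Rightarrow> 'a) set \<Rightarrow> bool" where
  "two_sided_ideal n c I \<longleftrightarrow> I \<subseteq> vecs n \<and> (\<lambda>_. 0) \<in> I \<and>
     (\<forall>x\<in>I. \<forall>y\<in>I. (\<lambda>m. x m + y m) \<in> I) \<and>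
     (\<forall>a. \<forall>x\<in>I. (\<lambda>m. a * x m) \<in> I) \<and>
     (\<forall>x\<in>vecs n. \<forall>y\<in>I. prod_sc n c x y \<in> I \<and> prod_sc n c y x \<in> I)"

definition span_first :: "nat \<Rightarrow> nat \<Rightarrow> (nat \<Rightarrow> 'a::field) set" where
  "span_first n r = {x \<in> vecs n. \<forall>i. r < i \<longrightarrow> x i = 0}"

end

theory Submission
  imports Defs
begin

(* Write e_i e_j = sum_m c i j m e_m.  Triangularity of all L(e_k) says that
   c i j m = 0 for m > j, and the weight normalisation says that the diagonal of L(e_k)
   vanishes for k < n while L(e_n) has diagonal 1.

   (1) Comparing the (n-1)-st coordinates of the right-symmetric identity
       (e_n e_k) e_n = (e_n e_n) e_k gives  sum_{i<=k} c n k i * c i n (n-1) = 0  for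
       k <= n-2, because the right-hand side is already triangular below n-1.  Since the
       diagonal entry c n k k is nonzero, strong induction on k yields c k n (n-1) = 0.
   (2) A flag subspace span(e_1,...,e_r) is a two-sided ideal as soon as every product
       e_i e_j with i <= r or j <= r has no component above r.  For r = n-2 this follows
       from triangularity, the vanishing diagonal of L(e_i) for i <= n-2, and (1).

   The nilpotency and algebraic closedness hypotheses of the paper only serve to produce
   the triangular basis; with that basis given, the argument above does not need them. *)

lemma basis_vec_in_vecs: "i \<in> {1..n} \<Longrightarrow> basis_vec i \<in> vecs n"
  by (auto simp: vecs_def basis_vec_def)

lemma prod_sc_basis_right:
  assumes "j \<in> {1..n}"
  shows "prod_sc n c x (basis_vec j) m = (if m \<in> {1..n} then (\<Sum>i=1..n. x i * c i j m) else 0)"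
proof -
  have "(\<Sum>j'=1..n. x i * basis_vec j j' * c i j' m) = x i * c i j m" for i
  proof -
    have "(\<Sum>j'=1..n. x i * basis_vec j j' * c i j' m)
        = (\<Sum>j'\<in>{1..n}. if j' = j then x i * c i j m else 0)"
      by (rule sum.cong) (auto simp: basis_vec_def)
    also have "\<dots> = x i * c i j m" using assms by (simp add: sum.delta)
    finally show ?thesis .
  qed
  then show ?thesis by (simp add: prod_sc_def)
qed

lemma prod_sc_basis_basis:
  assumes "i \<in> {1..n}" "j \<in> {1..n}"
  shows "prod_sc n c (basis_vec i) (basis_vec j) = (\<lambda>m. if m \<in> {1..n} then c i j m else 0)"
proof
  fix m
  have "(\<Sum>i'=1..n. basis_vec i i' * c i' j m) = (\<Sum>i'\<in>{1..n}. if i' = i then c i j m else 0)"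
    by (rule sum.cong) (auto simp: basis_vec_def)
  also have "\<dots> = c i j m" using assms by (simp add: sum.delta)
  finally show "prod_sc n c (basis_vec i) (basis_vec j) m = (if m \<in> {1..n} then c i j m else 0)"
    using assms by (simp add: prod_sc_basis_right)
qed

lemma LR_structure_constants_right_symmetric:
  assumes LR: "is_LR_algebra n c"
    and a: "a \<in> {1..n}" and b: "b \<in> {1..n}" and d: "d \<in> {1..n}" and m: "m \<in> {1..n}"
  shows "(\<Sum>i=1..n. c a b i * c i d m) = (\<Sum>i=1..n. c a d i * c i b m)"
proof -
  have "prod_sc n c (prod_sc n c (basis_vec a) (basis_vec b)) (basis_vec d)
      = prod_sc n c (prod_sc n c (basis_vec a) (basis_vec d)) (basis_vec b)"
    using LR basis_vec_in_vecs[OF a] basis_vec_in_vecs[OF b] basis_vec_in_vecs[OF d]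
    unfolding is_LR_algebra_def by blast
  then have "prod_sc n c (prod_sc n c (basis_vec a) (basis_vec b)) (basis_vec d) m
      = prod_sc n c (prod_sc n c (basis_vec a) (basis_vec d)) (basis_vec b) m"
    by simp
  then show ?thesis
    using a b d m by (simp add: prod_sc_basis_basis prod_sc_basis_right)
qed

lemma superdiagonal_entry_vanishes:
  fixes c :: "nat \<Rightarrow> nat \<Rightarrow> nat \<Rightarrow> 'a::field"
  assumes LR: "is_LR_algebra n c"
    and n2: "n \<ge> 2"
    and upper: "\<And>k i j. k \<in> {1..n} \<Longrightarrow> i \<in> {1..n} \<Longrightarrow> j \<in> {1..n} \<Longrightarrow> j < i \<Longrightarrow> c k j i = 0"
    and diag_n: "\<And>i. i \<in> {1..n} \<Longrightarrow> c n i i \<noteq> 0"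
  shows "1 \<le> k \<Longrightarrow> k \<le> n - 2 \<Longrightarrow> c k n (n - 1) = 0"
proof (induction k rule: less_induct)
  case (less k)
  have nn: "n \<in> {1..n}" and m: "n - 1 \<in> {1..n}" and kn: "k \<in> {1..n}"
    using n2 less.prems by auto
  text \<open>The (n-1)-st coordinate of (e_n e_k) e_n only sees e_1,...,e_k in e_n e_k,
    while that of (e_n e_n) e_k vanishes since e_i e_k lies in span(e_1,...,e_k).\<close>
  have "(\<Sum>i=1..k. c n k i * c i n (n-1)) = (\<Sum>i=1..n. c n k i * c i n (n-1))"
    by (rule sum.mono_neutral_left) (use upper kn nn in auto)
  also have "\<dots> = (\<Sum>i=1..n. c n n i * c i k (n-1))"
    using LR_structure_constants_right_symmetric[OF LR nn kn nn m] .
  also have "\<dots> = 0"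
    by (rule sum.neutral) (use upper kn m less.prems in auto)
  finally have relation: "(\<Sum>i=1..k. c n k i * c i n (n-1)) = 0" .
  have "(\<Sum>i=1..k. c n k i * c i n (n-1))
      = c n k k * c k n (n-1) + (\<Sum>i\<in>{1..k}-{k}. c n k i * c i n (n-1))"
    using less.prems by (subst sum.remove[of _ k]) auto
  also have "(\<Sum>i\<in>{1..k}-{k}. c n k i * c i n (n-1)) = 0"
    by (rule sum.neutral) (use less in auto)
  finally have "c n k k * c k n (n-1) = 0" using relation by simp
  then show ?case using diag_n[OF kn] by simp
qed

lemma prod_sc_coordinate_vanishes:
  assumes "\<And>i j. i \<in> {1..n} \<Longrightarrow> j \<in> {1..n} \<Longrightarrow> x i \<noteq> 0 \<Longrightarrow> y j \<noteq> 0 \<Longrightarrow> c i j m = 0"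
  shows "prod_sc n c x y m = 0"
proof -
  have "\<forall>i\<in>{1..n}. \<forall>j\<in>{1..n}. x i * y j * c i j m = 0"
    using assms by fastforce
  then show ?thesis by (simp add: prod_sc_def sum.neutral)
qed

lemma span_first_two_sided_ideal:
  assumes closed: "\<And>i j m. i \<in> {1..n} \<Longrightarrow> j \<in> {1..n} \<Longrightarrow> m \<in> {1..n} \<Longrightarrow> r < m
      \<Longrightarrow> i \<le> r \<or> j \<le> r \<Longrightarrow> c i j m = 0"
  shows "two_sided_ideal n c (span_first n r)"
proof -
  have mult_closed: "prod_sc n c x y \<in> span_first n r"
    if factor: "x \<in> span_first n r \<or> y \<in> span_first n r" for x y
    unfolding span_first_def
  proof (intro CollectI conjI allI impI)
    show "prod_sc n c x y \<in> vecs n" by (simp add: vecs_def prod_sc_def)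
    fix m assume m: "r < m"
    show "prod_sc n c x y m = 0"
    proof (cases "m \<in> {1..n}")
      case True
      show ?thesis
      proof (rule prod_sc_coordinate_vanishes)
        fix i j assume i: "i \<in> {1..n}" and j: "j \<in> {1..n}"
          and xi: "x i \<noteq> 0" and yj: "y j \<noteq> 0"
        have "i \<le> r" if "x \<in> span_first n r"
          using that xi by (auto simp: span_first_def not_le[symmetric])
        moreover have "j \<le> r" if "y \<in> span_first n r"
          using that yj by (auto simp: span_first_def not_le[symmetric])
        ultimately have "i \<le> r \<or> j \<le> r" using factor by blast
        then show "c i j m = 0" by (rule closed[OF i j True m])
      qed
    qed (auto simp: prod_sc_def)
  qed
  show ?thesis
    unfolding two_sided_ideal_def using mult_closed
    by (auto simp: span_first_def vecs_def)
qed

theorem lemma2p3: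
  fixes n :: nat
    and c :: "nat \<Rightarrow> nat \<Rightarrow> nat \<Rightarrow> 'a::field_char_0"
    and \<alpha> :: "nat \<Rightarrow> 'a"
  assumes closed: "alg_closed TYPE('a)"
    and n2: "n \<ge> 2"
    and LR: "is_LR_algebra n c"
    and nil: "lie_nilpotent n c"
    and upper: "\<And>k i j. k \<in> {1..n} \<Longrightarrow> i \<in> {1..n} \<Longrightarrow> j \<in> {1..n} \<Longrightarrow> j < i \<Longrightarrow> c k j i = 0"
    and weight: "\<And>k i. k \<in> {1..n} \<Longrightarrow> i \<in> {1..n} \<Longrightarrow> c k i i = \<alpha> k"
    and norm_n: "\<alpha> n = 1"
    and norm_k: "\<And>k. 1 \<le> k \<Longrightarrow> k \<le> n - 1 \<Longrightarrow> \<alpha> k = 0"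
  shows "(\<forall>k. 1 \<le> k \<and> k \<le> n - 2 \<longrightarrow> c k n (n - 1) = 0)
         \<and> two_sided_ideal n c (span_first n (n - 2))"
proof -
  have "c n i i \<noteq> 0" if "i \<in> {1..n}" for i
    using weight[OF _ that] norm_n n2 by simp
  then have entries: "c k n (n - 1) = 0" if "1 \<le> k" "k \<le> n - 2" for k
    using superdiagonal_entry_vanishes[OF LR n2 upper] that by blast
  have "c i j m = 0"
    if "i \<in> {1..n}" "j \<in> {1..n}" "m \<in> {1..n}" "n - 2 < m" "i \<le> n - 2 \<or> j \<le> n - 2" for i j m
  proof -
    have "j < m \<or> (j = m \<and> i \<le> n - 2) \<or> (j = n \<and> m = n - 1 \<and> i \<le> n - 2)"
      using that by auto
    then consider "j < m" | "j = m" "i \<le> n - 2" | "j = n" "m = n - 1" "i \<le> n - 2"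
      by blast
    then show ?thesis
    proof cases
      case 1 then show ?thesis using upper[of i m j] that by simp
    next
      case 2 then show ?thesis using weight norm_k that by simp
    next
      case 3 then show ?thesis using entries that by simp
    qed
  qed
  then have "two_sided_ideal n c (span_first n (n - 2))"
    by (rule span_first_two_sided_ideal)
  with entries show ?thesis by blast
qed

end
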